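(* Let $(X,\tau)$ be a topological space where $X$ is an uncountable set. If $\tau\subseteq\mathcal{C}(X)$, where $\mathcal{C}(X)=\{A\subseteq X: A\text{ is countable or } X\setminus A \text{ is countable}\}$, then every discrete subset of $X$ (discrete in the subspace topology) is countable. *)

theory Defs
  imports "HOL-Analysis.Analysis"
begin

definition cocountable_sets :: "'a set \<Rightarrow> 'a set set" where
  "cocountable_sets X = {A. A \<subseteq> X \<and> (countable A \<or> countable (X - A))}"

end

theory Submission
  imports Defs
begin

text \<open>Every subset S of a discrete subspace D is open in D, hence the trace on D of an open set,
  which is countable or cocountable; so S is countable or cocountable relative to D. But an
  uncountable D is the disjoint union of two uncountable sets, neither of which is countable or
  cocountable in D.\<close>

lemma uncountable_split:
  includes cardinal_syntax
  assumes "uncountable D"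
  obtains S1 S2 where "S1 \<subseteq> D" "S2 \<subseteq> D" "S1 \<inter> S2 = {}" "uncountable S1" "uncountable S2"
proof -
  have "infinite D" using assms countable_finite by blast
  then have "|D <+> D| =o |D|"
    by (rule card_of_Plus_infinite1[OF _ ordLeq_refl[OF card_of_Card_order]])
  then obtain f where f: "bij_betw f (D <+> D) D"
    using card_of_ordIso by blast
  then have inj: "inj_on f (D <+> D)"
    by (simp add: bij_betw_def)
  have uncountable_half: "uncountable (f ` (c ` D))"
    if "inj c" "c ` D \<subseteq> D <+> D" for c :: "'a \<Rightarrow> 'a + 'a"
  proof
    assume "countable (f ` (c ` D))"
    moreover have "inj_on (f \<circ> c) D"
      using that inj by (meson comp_inj_on inj_on_subset subset_UNIV)
    ultimately have "countable D"
      by (metis countable_image_inj_on image_comp)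
    with assms show False by simp
  qed
  show thesis
  proof (rule that[of "f ` Inl ` D" "f ` Inr ` D"])
    show "f ` Inl ` D \<subseteq> D" "f ` Inr ` D \<subseteq> D"
      using f by (auto simp: bij_betw_def)
    show "f ` Inl ` D \<inter> f ` Inr ` D = {}"
      using inj by (auto simp: inj_on_def)
    show "uncountable (f ` Inl ` D)" "uncountable (f ` Inr ` D)"
      by (rule uncountable_half; auto)+
  qed
qed

lemma countable_if_subsets_countable_or_cocountable:
  assumes "\<And>S. S \<subseteq> D \<Longrightarrow> countable S \<or> countable (D - S)"
  shows "countable D"
proof (rule ccontr)
  assume "uncountable D"
  then obtain S1 S2 where S: "S1 \<subseteq> D" "S2 \<subseteq> D" "S1 \<inter> S2 = {}" "uncountable S1" "uncountable S2"
    by (rule uncountable_split)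
  have "S2 \<subseteq> D - S1"
    using S(2,3) by blast
  with S(4,5) assms[OF S(1)] show False
    by (meson countable_subset)
qed

lemma discrete_subspace_subset_countable_or_cocountable:
  assumes opens: "{U. openin T U} \<subseteq> cocountable_sets (topspace T)"
    and discrete: "subtopology T D = discrete_topology D"
    and "S \<subseteq> D"
  shows "countable S \<or> countable (D - S)"
proof -
  have "openin (subtopology T D) S"
    using \<open>S \<subseteq> D\<close> by (simp add: discrete)
  then obtain U where "openin T U" and S_eq: "S = U \<inter> D"
    by (auto simp: openin_subtopology)
  then have "countable U \<or> countable (topspace T - U)"
    using opens by (auto simp: cocountable_sets_def)
  moreover have "D \<subseteq> topspace T"
    using discrete by (metis inf.absorb_iff2 topspace_discrete_topology topspace_subtopology)
  then have "S \<subseteq> U" "D - S \<subseteq> topspace T - U"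
    using S_eq by auto
  ultimately show ?thesis
    using countable_subset by blast
qed

theorem lemma3p7:
  fixes T :: "'a topology" and X :: "'a set"
  assumes "topspace T = X"
    and "uncountable X"
    and "{U. openin T U} \<subseteq> cocountable_sets X"
  shows "\<forall>D. D \<subseteq> X \<and> subtopology T D = discrete_topology D \<longrightarrow> countable D"
proof (intro allI impI)
  fix D assume D: "D \<subseteq> X \<and> subtopology T D = discrete_topology D"
  show "countable D"
  proof (rule countable_if_subsets_countable_or_cocountable)
    fix S assume "S \<subseteq> D"
    with D assms(1,3) show "countable S \<or> countable (D - S)"
      by (intro discrete_subspace_subset_countable_or_cocountable) auto
  qed
qed

end
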